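(* Let $\mu\in\mathbb{R}\setminus\{0\}$ and let $X$ have the skew-symmetric-Laplace-uniform density $g$ with parameter $\mu$ (defined in the context), and write $\mu'_k=E(X^k)$. If $\mu>0$, then $$\mu'_1=\frac{2}{\mu}-\left(1+\frac{2}{\mu}\right)e^{-\mu},\quad \mu'_2=2,\quad \mu'_3=\frac{24}{\mu}-e^{-\mu}\left[\mu^2+6\mu+18+\frac{24}{\mu}\right],\quad \mu'_4=24.$$ If $\mu<0$, the same formulas hold after replacing $\mu$ by $-\mu$ in each expression and additionally multiplying the expressions for the odd-order moments $\mu'_1,\mu'_3$ by $-1$. Furthermore, for every $\mu\neq 0$ and every integer $r\ge 1$, $\mu'_{2r}=(2r)!$.
   Context: For $\mu\in\mathbb{R}\setminus\{0\}$, the skew-symmetric-Laplace-uniform distribution $SSLUD(\mu)$ is the distribution on $\mathbb{R}$ with density $$g(x)=\begin{cases} 0 & \text{if } x/\mu<-1,\\ e^{-|x|}\left(\dfrac{x}{2\mu}+\dfrac12\right) & \text{if } -1\le x/\mu<1,\\ e^{-|x|} & \text{if } x/\mu\ge 1.\end{cases}$$ *)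

theory Defs
  imports "HOL-Probability.Probability"
begin

definition sslud_density :: "real \<Rightarrow> real \<Rightarrow> real" where
  "sslud_density \<mu> x =
     (if x / \<mu> < -1 then 0
      else if x / \<mu> < 1 then exp (- \<bar>x\<bar>) * (x / (2 * \<mu>) + 1 / 2)
      else exp (- \<bar>x\<bar>))"

end

theory Submission
  imports Defs
begin

(* Folding the line at 0, a moment of order n becomes an integral over [0, oo) of x^n against
   g(x) + g(-x) = e^(-|x|) for even n, and against g(x) - g(-x) = sgn mu e^(-x) min(x/|mu|, 1)
   for odd n. The first gives the Gamma integral n!; the second splits into complete and
   incomplete Gamma integrals over [0, oo) and [0, |mu|]. *)

(* The incomplete Gamma integral of x^k e^(-x) over [0, a], in the closed form of the Erlang
   distribution function used by the library. *)
definition lower_gamma_nat :: "nat \<Rightarrow> real \<Rightarrow> real" where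
  "lower_gamma_nat k a = (1 - (\<Sum>n\<le>k. (a^n * exp (-a)) / fact n)) * fact k"

lemma has_bochner_integral_power_times_exp_Ici:
  "has_bochner_integral lborel (\<lambda>x::real. indicator {0..} x * (x^k * exp (-x))) (fact k)"
proof (rule has_bochner_integral_nn_integral)
  show "(\<integral>\<^sup>+x. ennreal (indicator {0..} x * (x^k * exp (-x))) \<partial>lborel) = ennreal (fact k)"
    using nn_intergal_power_times_exp_Ici[of k]
    by (simp add: indicator_mult_ennreal mult.commute)
qed (auto split: split_indicator)

lemma has_bochner_integral_power_times_exp_Icc:
  assumes "0 \<le> a"
  shows "has_bochner_integral lborel (\<lambda>x::real. indicator {0..a} x * (x^k * exp (-x)))
           (lower_gamma_nat k a)"
proof (rule has_bochner_integral_nn_integral)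
  show "(\<integral>\<^sup>+x. ennreal (indicator {0..a} x * (x^k * exp (-x))) \<partial>lborel) = ennreal (lower_gamma_nat k a)"
    using nn_intergal_power_times_exp_Icc[OF assms, of k]
    by (simp add: lower_gamma_nat_def indicator_mult_ennreal mult.commute)
  show "0 \<le> lower_gamma_nat k a"
    using erlang_CDF_nonneg[of 1 k a] assms by (simp add: erlang_CDF_def lower_gamma_nat_def)
qed (auto split: split_indicator)

lemma integrable_exp_abs_times_power: "integrable lborel (\<lambda>x::real. exp (- \<bar>x\<bar>) * \<bar>x\<bar>^n)"
proof -
  have "has_bochner_integral lborel (\<lambda>x::real. indicator {0..} x *\<^sub>R (exp (- \<bar>x\<bar>) * \<bar>x\<bar>^n)) (fact n)"
    using has_bochner_integral_power_times_exp_Ici[of n]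
    by (rule has_bochner_integral_cong[THEN iffD1, rotated 3]) (auto split: split_indicator)
  then have "has_bochner_integral lborel (\<lambda>x::real. exp (- \<bar>x\<bar>) * \<bar>x\<bar>^n) (2 *\<^sub>R fact n)"
    by (rule has_bochner_integral_even_function) simp
  then show ?thesis
    by (simp add: has_bochner_integral_iff)
qed

lemma has_bochner_integral_fold_Ici:
  fixes f :: "real \<Rightarrow> real"
  assumes f: "integrable lborel f"
    and folded: "has_bochner_integral lborel (\<lambda>x. indicator {0..} x * (f x + f (-x))) I"
  shows "has_bochner_integral lborel f I"
proof -
  have "has_bochner_integral lborel (\<lambda>x. f x + f (-x)) (2 *\<^sub>R I)"
    using folded by (intro has_bochner_integral_even_function) auto
  moreover have "has_bochner_integral lborel (\<lambda>x. f (-x)) (integral\<^sup>L lborel f)"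
    using lborel_has_bochner_integral_real_affine_iff[of "-1" f _ 0] has_bochner_integral_integrable[OF f]
    by simp
  ultimately have "has_bochner_integral lborel f (2 * I - integral\<^sup>L lborel f)"
    using has_bochner_integral_diff by fastforce
  then show ?thesis
    using f has_bochner_integral_integral_eq by fastforce
qed

lemma sslud_density_measurable [measurable]: "sslud_density \<mu> \<in> borel_measurable borel"
  unfolding sslud_density_def by measurable

lemma sslud_density_bounds: "0 \<le> sslud_density \<mu> x" "sslud_density \<mu> x \<le> exp (- \<bar>x\<bar>)"
proof -
  have "x / (2 * \<mu>) + 1 / 2 = (x / \<mu> + 1) / 2"
    by (simp add: field_simps)
  then show "0 \<le> sslud_density \<mu> x" "sslud_density \<mu> x \<le> exp (- \<bar>x\<bar>)"
    by (auto simp: sslud_density_def mult_le_cancel_left1)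
qed

lemma sslud_density_add_reflect: "sslud_density \<mu> x + sslud_density \<mu> (- x) = exp (- \<bar>x\<bar>)"
  by (auto simp: sslud_density_def field_simps)

lemma sslud_density_diff_reflect:
  assumes "\<mu> \<noteq> 0" "0 \<le> x"
  shows "sslud_density \<mu> x - sslud_density \<mu> (- x) = sgn \<mu> * exp (- x) * min (x / \<bar>\<mu>\<bar>) 1"
  using assms by (auto simp: sslud_density_def field_simps sgn_if abs_if min_def divide_less_eq less_divide_eq)

lemma integrable_sslud_moment: "integrable lborel (\<lambda>x. sslud_density \<mu> x * x^n)"
proof (rule Bochner_Integration.integrable_bound[OF integrable_exp_abs_times_power[of n]])
  show "AE x in lborel. norm (sslud_density \<mu> x * x^n) \<le> norm (exp (- \<bar>x\<bar>) * \<bar>x\<bar>^n)"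
    using sslud_density_bounds by (auto simp: abs_mult power_abs intro!: mult_right_mono)
qed measurable

lemma sslud_moment_even:
  assumes "even n"
  shows "has_bochner_integral lborel (\<lambda>x. sslud_density \<mu> x * x^n) (fact n)"
proof (rule has_bochner_integral_fold_Ici[OF integrable_sslud_moment])
  have folded: "indicator {0..} x * (sslud_density \<mu> x * x^n + sslud_density \<mu> (- x) * (- x)^n)
      = indicator {0..} x * (x^n * exp (- x))" for x :: real
  proof -
    have "sslud_density \<mu> x * x^n + sslud_density \<mu> (- x) * (- x)^n
        = x^n * (sslud_density \<mu> x + sslud_density \<mu> (- x))"
      using assms by (simp add: algebra_simps)
    then show ?thesis
      by (simp add: sslud_density_add_reflect split: split_indicator)
  qed
  then show "has_bochner_integral lborel
      (\<lambda>x. indicator {0..} x * (sslud_density \<mu> x * x^n + sslud_density \<mu> (- x) * (- x)^n)) (fact n)"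
    using has_bochner_integral_power_times_exp_Ici[of n] by (simp only: folded)
qed

lemma sslud_moment_odd:
  assumes "\<mu> \<noteq> 0" "odd n"
  shows "has_bochner_integral lborel (\<lambda>x. sslud_density \<mu> x * x^n)
           (sgn \<mu> * (fact n - lower_gamma_nat n \<bar>\<mu>\<bar> + lower_gamma_nat (n + 1) \<bar>\<mu>\<bar> / \<bar>\<mu>\<bar>))"
proof (rule has_bochner_integral_fold_Ici[OF integrable_sslud_moment])
  let ?a = "\<bar>\<mu>\<bar>"
  have "indicator {0..} x * (sslud_density \<mu> x * x^n + sslud_density \<mu> (- x) * (- x)^n)
      = sgn \<mu> * (indicator {0..} x * (x^n * exp (- x)) - indicator {0..?a} x * (x^n * exp (- x))
                   + indicator {0..?a} x * (x^(n + 1) * exp (- x)) / ?a)" for x :: real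
  proof (cases "0 \<le> x")
    case True
    then have "sslud_density \<mu> x * x^n + sslud_density \<mu> (- x) * (- x)^n
        = x^n * (sgn \<mu> * exp (- x) * min (x / ?a) 1)"
      using sslud_density_diff_reflect[OF assms(1) True] assms(2) by (simp add: algebra_simps)
    then show ?thesis
      using True assms(1) by (auto simp: min_def field_simps split: split_indicator)
  qed simp
  moreover have "has_bochner_integral lborel
      (\<lambda>x. sgn \<mu> * (indicator {0..} x * (x^n * exp (- x)) - indicator {0..?a} x * (x^n * exp (- x))
                   + indicator {0..?a} x * (x^(n + 1) * exp (- x)) / ?a))
      (sgn \<mu> * (fact n - lower_gamma_nat n ?a + lower_gamma_nat (n + 1) ?a / ?a))"
    by (intro has_bochner_integral_mult_right has_bochner_integral_add has_bochner_integral_diff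
          has_bochner_integral_divide_zero has_bochner_integral_power_times_exp_Ici
          has_bochner_integral_power_times_exp_Icc) auto
  ultimately show "has_bochner_integral lborel
      (\<lambda>x. indicator {0..} x * (sslud_density \<mu> x * x^n + sslud_density \<mu> (- x) * (- x)^n))
      (sgn \<mu> * (fact n - lower_gamma_nat n ?a + lower_gamma_nat (n + 1) ?a / ?a))"
    by simp
qed

lemma sslud_odd_moment_1:
  assumes "0 < a"
  shows "fact 1 - lower_gamma_nat 1 a + lower_gamma_nat 2 a / a = 2 / a - (1 + 2 / a) * exp (- a)"
  using assms by (simp add: lower_gamma_nat_def eval_nat_numeral field_simps)

lemma sslud_odd_moment_3:
  assumes "0 < a"
  shows "fact 3 - lower_gamma_nat 3 a + lower_gamma_nat 4 a / a
           = 24 / a - exp (- a) * (a^2 + 6 * a + 18 + 24 / a)"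
  using assms by (simp add: lower_gamma_nat_def eval_nat_numeral field_simps)

theorem mainTheorem3:
  fixes M :: "'a measure" and X :: "'a \<Rightarrow> real" and \<mu> :: real
  assumes "prob_space M"
    and "\<mu> \<noteq> 0"
    and "distributed M lborel X (\<lambda>x. ennreal (sslud_density \<mu> x))"
  shows "(\<mu> > 0 \<longrightarrow>
            (\<integral>\<omega>. X \<omega> ^ 1 \<partial>M) = 2 / \<mu> - (1 + 2 / \<mu>) * exp (- \<mu>) \<and>
            (\<integral>\<omega>. X \<omega> ^ 2 \<partial>M) = 2 \<and>
            (\<integral>\<omega>. X \<omega> ^ 3 \<partial>M) = 24 / \<mu> - exp (- \<mu>) * (\<mu>^2 + 6 * \<mu> + 18 + 24 / \<mu>) \<and>
            (\<integral>\<omega>. X \<omega> ^ 4 \<partial>M) = 24)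
       \<and> (\<mu> < 0 \<longrightarrow>
            (\<integral>\<omega>. X \<omega> ^ 1 \<partial>M) = - (2 / (- \<mu>) - (1 + 2 / (- \<mu>)) * exp (- (- \<mu>))) \<and>
            (\<integral>\<omega>. X \<omega> ^ 2 \<partial>M) = 2 \<and>
            (\<integral>\<omega>. X \<omega> ^ 3 \<partial>M) =
               - (24 / (- \<mu>) - exp (- (- \<mu>)) * ((- \<mu>)^2 + 6 * (- \<mu>) + 18 + 24 / (- \<mu>))) \<and>
            (\<integral>\<omega>. X \<omega> ^ 4 \<partial>M) = 24)
       \<and> (\<forall>r::nat. r \<ge> 1 \<longrightarrow> (\<integral>\<omega>. X \<omega> ^ (2 * r) \<partial>M) = fact (2 * r))"
proof -
  have moment: "(\<integral>\<omega>. X \<omega> ^ n \<partial>M) = (\<integral>x. sslud_density \<mu> x * x^n \<partial>lborel)" for n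
    using distributed_integral[OF assms(3), of "\<lambda>x. x^n"] sslud_density_bounds(1) by simp
  have even: "(\<integral>\<omega>. X \<omega> ^ (2 * r) \<partial>M) = fact (2 * r)" for r
    unfolding moment using sslud_moment_even[of "2 * r" \<mu>] by (simp add: has_bochner_integral_integral_eq)
  have odd: "(\<integral>\<omega>. X \<omega> ^ n \<partial>M)
      = sgn \<mu> * (fact n - lower_gamma_nat n \<bar>\<mu>\<bar> + lower_gamma_nat (n + 1) \<bar>\<mu>\<bar> / \<bar>\<mu>\<bar>)"
    if "odd n" for n
    unfolding moment using sslud_moment_odd[OF assms(2) that] by (simp add: has_bochner_integral_integral_eq)
  have pos: "0 < \<bar>\<mu>\<bar>"
    using assms(2) by simp
  have first: "(\<integral>\<omega>. X \<omega> ^ 1 \<partial>M)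
      = sgn \<mu> * (2 / \<bar>\<mu>\<bar> - (1 + 2 / \<bar>\<mu>\<bar>) * exp (- \<bar>\<mu>\<bar>))"
    using odd[OF odd_one] sslud_odd_moment_1[OF pos] by (simp add: numeral_2_eq_2)
  have third: "(\<integral>\<omega>. X \<omega> ^ 3 \<partial>M)
      = sgn \<mu> * (24 / \<bar>\<mu>\<bar> - exp (- \<bar>\<mu>\<bar>) * (\<bar>\<mu>\<bar>^2 + 6 * \<bar>\<mu>\<bar> + 18 + 24 / \<bar>\<mu>\<bar>))"
    using odd[of 3, OF odd_numeral] sslud_odd_moment_3[OF pos] by simp
  have "(\<integral>\<omega>. X \<omega> ^ 2 \<partial>M) = 2" "(\<integral>\<omega>. X \<omega> ^ 4 \<partial>M) = 24"
    using even[of 1] even[of 2] by (simp_all add: eval_nat_numeral)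
  then show ?thesis
    using first third even by (cases "0 < \<mu>") auto
qed

end
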